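(* If $n$ is a non-negative integer, then $$\sum_{k = 1}^n \sum_{j = 0}^{k - 1} \frac{\binom{n}{j}^2}{k - j} = \binom{2n}{n} \left(2H_n - H_{2n} \right)$$ and $$\sum_{k = 1}^n \sum_{j = 0}^{k - 1} \frac{1}{k - j}\binom{n}{j}\binom{2n}{n + j} = \binom{3n}{n} H_n - \sum_{k = 1}^n \frac{1}{k}\binom{3n - k}{n - k}.$$
   Context: $H_n=\sum_{m=1}^n\frac1m$. Empty sums are zero. *)

theory Defs
  imports "HOL-Analysis.Analysis"
begin

end

theory Submission
  imports Defs
begin

text \<open>
  For r \<le> m, the number binom(m,r) (H_m - H_{m-r}) is the derivative at x = m of the
  binomial polynomial binom(x,r). Differentiating Pascal's rule and the Vandermonde
  convolution binom(x+N,r) = \<Sum>_j binom(x,j) binom(N,r-j) in x gives the corresponding identities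
  for these derivatives. Swapping the double sums turns the inner sums of 1/(k-j) into harmonic
  numbers H_{n-j}, and writing H_{n-j} = H_n - (H_n - H_{n-j}) reduces both formulas to
  Vandermonde's identity and its differentiated form; the remaining sum
  \<Sum>_k binom(3n-k,n-k)/k is itself the derivative of binom(x,n) at x = 3n, by the
  differentiated Pascal rule.
\<close>

text \<open>Outside r \<le> m this is no longer the derivative: its value is then 0.\<close>

definition binomial_deriv :: "nat \<Rightarrow> nat \<Rightarrow> real" where
  "binomial_deriv m r = real (m choose r) * (harm m - harm (m - r))"

lemma harm_0 [simp]: "harm 0 = 0"
  by (simp add: harm_def)

lemma binomial_deriv_0 [simp]: "binomial_deriv m 0 = 0"
  by (simp add: binomial_deriv_def)

lemma binomial_deriv_Suc_Suc:
  assumes "r < m"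
  shows "binomial_deriv (Suc m) (Suc r) = binomial_deriv m (Suc r) + binomial_deriv m r"
proof -
  have "real (m - r) * real (Suc m choose Suc r) = real (Suc m) * real (m choose Suc r)"
    using binomial_absorb_comp[of "Suc m" "Suc r"] by (metis diff_Suc_Suc diff_Suc_1 of_nat_mult)
  then have absorb: "real (Suc m choose Suc r) / real (Suc m) = real (m choose Suc r) / real (m - r)"
    using assms by (simp add: field_simps)
  have harm_m_r: "harm (m - r) = harm (m - Suc r) + 1 / real (m - r)"
    using assms harm_Suc[of "m - Suc r"] by (simp add: Suc_diff_Suc inverse_eq_divide)
  have "binomial_deriv (Suc m) (Suc r)
      = real (Suc m choose Suc r) * (harm m - harm (m - r)) + real (Suc m choose Suc r) / real (Suc m)"
    by (simp add: binomial_deriv_def harm_Suc inverse_eq_divide algebra_simps add_divide_distrib)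
  also have "\<dots> = binomial_deriv m (Suc r) + binomial_deriv m r"
    unfolding absorb binomial_deriv_def harm_m_r by (simp add: algebra_simps add_divide_distrib)
  finally show ?thesis .
qed

lemma double_sum_div_diff_eq_sum_harm:
  fixes a :: "nat \<Rightarrow> 'a :: real_normed_field"
  shows "(\<Sum>k=1..n. \<Sum>j=0..k-1. a j / of_nat (k - j)) = (\<Sum>j\<le>n. a j * harm (n - j))"
proof (induction n)
  case 0
  then show ?case by simp
next
  case (Suc n)
  have "(\<Sum>k=1..Suc n. \<Sum>j=0..k-1. a j / of_nat (k - j))
      = (\<Sum>j\<le>n. a j * harm (n - j)) + (\<Sum>j\<le>n. a j / of_nat (Suc n - j))"
    using Suc.IH by (simp add: atLeast0AtMost)
  also have "\<dots> = (\<Sum>j\<le>n. a j * harm (Suc n - j))"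
    by (simp add: sum.distrib [symmetric] Suc_diff_le harm_Suc algebra_simps inverse_eq_divide)
  also have "\<dots> = (\<Sum>j\<le>Suc n. a j * harm (Suc n - j))"
    by simp
  finally show ?case .
qed

lemma vandermonde_binomial_deriv:
  assumes "r \<le> n"
  shows "(\<Sum>j\<le>r. binomial_deriv n j * real (N choose (r - j))) = binomial_deriv (n + N) r"
  using assms
proof (induction N arbitrary: r)
  case 0
  have "(\<Sum>j\<le>r. binomial_deriv n j * real (0 choose (r - j)))
      = (\<Sum>j\<le>r. if j = r then binomial_deriv n j else 0)"
    by (intro sum.cong) auto
  then show ?case by simp
next
  case (Suc N)
  show ?case
  proof (cases r)
    case 0
    then show ?thesis by simp
  next
    case (Suc r')
    have "(\<Sum>j\<le>Suc r'. binomial_deriv n j * real (Suc N choose (Suc r' - j)))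
        = (\<Sum>j\<le>r'. binomial_deriv n j * (real (N choose (r' - j)) + real (N choose (Suc r' - j))))
          + binomial_deriv n (Suc r')"
      by (simp add: Suc_diff_le)
    also have "\<dots> = (\<Sum>j\<le>r'. binomial_deriv n j * real (N choose (r' - j)))
                   + (\<Sum>j\<le>Suc r'. binomial_deriv n j * real (N choose (Suc r' - j)))"
      by (simp add: distrib_left sum.distrib)
    also have "\<dots> = binomial_deriv (n + N) r' + binomial_deriv (n + N) (Suc r')"
      using Suc.IH[of r'] Suc.IH[of "Suc r'"] Suc.prems \<open>r = Suc r'\<close> by (simp del: sum.atMost_Suc)
    also have "\<dots> = binomial_deriv (n + Suc N) (Suc r')"
      using binomial_deriv_Suc_Suc[of r' "n + N"] Suc.prems \<open>r = Suc r'\<close> by simp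
    finally show ?thesis using \<open>r = Suc r'\<close> by simp
  qed
qed

lemma binomial_deriv_eq_sum_inverse:
  "binomial_deriv (n + p) n = (\<Sum>k=1..n. (1 / real k) * real ((n + p - k) choose (n - k)))"
proof (induction n arbitrary: p)
  case 0
  then show ?case by (simp add: binomial_deriv_def)
next
  case (Suc n)
  note IH_n = Suc.IH
  show ?case
  proof (induction p)
    case 0
    then show ?case by (simp add: binomial_deriv_def harm_def inverse_eq_divide)
  next
    case (Suc q)
    have "(\<Sum>k=1..Suc n. (1 / real k) * real ((Suc n + Suc q - k) choose (Suc n - k)))
        = (\<Sum>k=1..n. (1 / real k) * (real ((n + Suc q - k) choose (n - k))
                                        + real ((Suc n + q - k) choose (Suc n - k)))) + 1 / real (Suc n)"
      by (simp, intro sum.cong) (auto simp: Suc_diff_le)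
    also have "\<dots> = (\<Sum>k=1..n. (1 / real k) * real ((n + Suc q - k) choose (n - k)))
                   + (\<Sum>k=1..Suc n. (1 / real k) * real ((Suc n + q - k) choose (Suc n - k)))"
      by (simp add: distrib_left sum.distrib)
    also have "\<dots> = binomial_deriv (Suc (n + q)) n + binomial_deriv (Suc (n + q)) (Suc n)"
      using Suc.IH IH_n[of "Suc q"] by simp
    also have "\<dots> = binomial_deriv (Suc n + Suc q) (Suc n)"
      using binomial_deriv_Suc_Suc[of n "Suc (n + q)"] by simp
    finally show ?case ..
  qed
qed

lemma vandermonde_harm:
  "(\<Sum>j\<le>n. real (n choose j) * real (N choose (n - j)) * harm (n - j))
     = real ((n + N) choose n) * harm n - binomial_deriv (n + N) n"
proof -
  have "(\<Sum>j\<le>n. real (n choose j) * real (N choose (n - j)) * harm (n - j))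
      = (\<Sum>j\<le>n. real (n choose j) * real (N choose (n - j)) * harm n
                    - binomial_deriv n j * real (N choose (n - j)))"
    by (simp add: binomial_deriv_def algebra_simps)
  also have "\<dots> = (\<Sum>j\<le>n. real (n choose j) * real (N choose (n - j))) * harm n
                   - (\<Sum>j\<le>n. binomial_deriv n j * real (N choose (n - j)))"
    by (simp add: sum_subtractf sum_distrib_right)
  also have "\<dots> = real ((n + N) choose n) * harm n - binomial_deriv (n + N) n"
    by (simp add: vandermonde_binomial_deriv vandermonde flip: of_nat_mult of_nat_sum)
  finally show ?thesis .
qed

theorem proposition17:
  fixes n :: nat
  shows "((\<Sum>k=1..n. \<Sum>j=0..k-1. real ((n choose j)^2) / real (k - j))
           = real ((2*n) choose n) * (2 * harm n - harm (2*n))) \<and>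
         ((\<Sum>k=1..n. \<Sum>j=0..k-1. (1 / real (k - j)) * real (n choose j) * real ((2*n) choose (n+j)))
           = real ((3*n) choose n) * harm n - (\<Sum>k=1..n. (1 / real k) * real ((3*n - k) choose (n - k))))"
proof
  have "(\<Sum>k=1..n. \<Sum>j=0..k-1. real ((n choose j)^2) / real (k - j))
      = (\<Sum>j\<le>n. real ((n choose j)^2) * harm (n - j))"
    by (rule double_sum_div_diff_eq_sum_harm)
  also have "\<dots> = (\<Sum>j\<le>n. real (n choose j) * real (n choose (n - j)) * harm (n - j))"
    by (intro sum.cong refl) (metis atMost_iff binomial_symmetric of_nat_mult power2_eq_square)
  also have "\<dots> = real ((2*n) choose n) * (2 * harm n - harm (2*n))"
    using vandermonde_harm[of n n] unfolding binomial_deriv_def mult_2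
    by (simp add: algebra_simps)
  finally show "(\<Sum>k=1..n. \<Sum>j=0..k-1. real ((n choose j)^2) / real (k - j))
      = real ((2*n) choose n) * (2 * harm n - harm (2*n))" .
next
  have "(\<Sum>k=1..n. \<Sum>j=0..k-1. (1 / real (k - j)) * real (n choose j) * real ((2*n) choose (n+j)))
      = (\<Sum>j\<le>n. real (n choose j) * real ((2*n) choose (n+j)) * harm (n - j))"
    using double_sum_div_diff_eq_sum_harm[of "\<lambda>j. real (n choose j) * real ((2*n) choose (n+j))"] by simp
  also have "\<dots> = (\<Sum>j\<le>n. real (n choose j) * real ((2*n) choose (n - j)) * harm (n - j))"
  proof (intro sum.cong refl)
    fix j assume "j \<in> {..n}"
    then show "real (n choose j) * real ((2*n) choose (n+j)) * harm (n - j)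
             = real (n choose j) * real ((2*n) choose (n - j)) * harm (n - j)"
      using binomial_symmetric[of "n + j" "2*n"] by simp
  qed
  also have "\<dots> = real ((3*n) choose n) * harm n - binomial_deriv (n + 2*n) n"
    using vandermonde_harm[of n "2*n"] by simp
  also have "\<dots> = real ((3*n) choose n) * harm n - (\<Sum>k=1..n. (1 / real k) * real ((3*n - k) choose (n - k)))"
    using binomial_deriv_eq_sum_inverse[of n "2*n"] by simp
  finally show "(\<Sum>k=1..n. \<Sum>j=0..k-1. (1 / real (k - j)) * real (n choose j) * real ((2*n) choose (n+j)))
      = real ((3*n) choose n) * harm n - (\<Sum>k=1..n. (1 / real k) * real ((3*n - k) choose (n - k)))" .
qed

end
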